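(* Suppose $(T_i,U_i)$, $i=1,\dots,n$, are generated independently from the first level of the model with fixed primary parameters $\theta^\star=(\theta_1^\star,\dots,\theta_n^\star)$ and fixed nuisance parameters $\nu^\star=(\nu_1^\star,\dots,\nu_n^\star)$, and that Assumption 1 holds. Let $G(\nu^\star):=\frac1n\sum_{i=1}^n\delta_{\nu_i^\star}$. Then $P^{\mathrm{or}}(T_i,U_i,G(\nu^\star))$, $i=1,\dots,n$, are compound p-values, i.e. $$\sup_{\alpha\in[0,1]}\Big(\frac1n\sum_{i\in\mathcal H_0}\mathbb P_{\nu^\star,\theta^\star}\big(P^{\mathrm{or}}(T_i,U_i,G(\nu^\star))\le\alpha\big)-\alpha\Big)_+\le0,$$ where $(x)_+=\max(x,0)$.
   Context: Setup: unit $i$'s data are summarized by $T_i\in\mathbb R$ and $U_i\in\mathcal U$; conditionally on parameters the pairs are independent, the law of $(T_i,U_i)$ depends only on $(\theta_i,\nu_i)$ through a common kernel, and the law of $U_i$ depends only on $\nu_i\in\mathcal V$. A null value $\theta_0$ is fixed, $\mathcal H_0=\{i:\theta_i^\star=\theta_0\}$. For a probability measure $G$ on $\mathcal V$, $P^{\mathrm{or}}(t,u,G):=\mathbb P(|T|\ge|t|\mid U=u)$ where $(T,U)$ is drawn with $\theta=\theta_0$ and $\nu\sim G$. $\mathbb P_{\nu^\star,\theta^\star}$ denotes probability with all parameters fixed. Assumption 1: for all $\nu,u$, the conditional law of $T_i$ given $\nu_i=\nu,U_i=u$ (under $\theta_i=\theta_0$) is absolutely continuous w.r.t. Lebesgue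 measure. *)

theory Defs
  imports "HOL-Probability.Probability"
begin

text \<open>
  A version of the oracle conditional tail probability
  P^or(t,u,G) = P(|T| >= |t| given U = u), where (T,U) is drawn with theta = theta0
  and nu ~ G, for the empirical distribution G = (1/n) sum_i delta_(nus i).
  Here K0 nu is the law of (T,U) under theta = theta0 and nuisance nu, and Q nu
  is the law of U under nuisance nu.  The joint law under the mixture is
  (1/n) sum_i K0 (nus i) and the U-marginal is (1/n) sum_i Q (nus i).
\<close>
definition oracle_pvalue_version ::
  "('v \<Rightarrow> (real \<times> 'u) measure) \<Rightarrow> 'u measure \<Rightarrow> ('v \<Rightarrow> 'u measure)
    \<Rightarrow> nat \<Rightarrow> (nat \<Rightarrow> 'v) \<Rightarrow> (real \<Rightarrow> 'u \<Rightarrow> real) \<Rightarrow> bool" where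
  "oracle_pvalue_version K0 MU Q n nus g \<longleftrightarrow>
     (\<lambda>(t, u). g t u) \<in> borel_measurable (borel \<Otimes>\<^sub>M MU) \<and>
     (\<forall>t u. 0 \<le> g t u) \<and>
     (\<forall>t. \<forall>B\<in>sets MU.
        ennreal (1 / real n) * (\<Sum>i<n. emeasure (K0 (nus i)) ({s. \<bar>t\<bar> \<le> \<bar>s\<bar>} \<times> B))
        = ennreal (1 / real n) * (\<Sum>i<n. \<integral>\<^sup>+ u\<in>B. ennreal (g t u) \<partial>(Q (nus i))))"

end

theory Submission
  imports Defs
begin

(*
  P^or(., u) is the survival function t |-> P(|T| >= |t| | U = u) of the conditional law of T
  under the empirical mixture of the null laws K(theta0, nu_i); that conditional law is
  sum_i w_i(u) kappa_i(u) with w_i = dQ_i / d(sum_j Q_j).  For any finite mixture of measures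
  the probability integral transform gives mu{t. mu{s. |t| <= |s|} <= alpha} <= alpha, atoms or
  not.  As P^or is only determined up to null sets, it agrees with this survival function for
  almost every u and Lebesgue-almost every t (Fubini), hence kappa_i(u)-almost everywhere by
  Assumption 1.  Integrating over u bounds sum_i P_i(P^or <= alpha) by n alpha, and the null
  units contribute only part of this sum.
*)

lemma upclosed_real_eq_UN_atLeast:
  fixes D :: "real set"
  assumes "D \<noteq> {}" and up: "\<And>x y. x \<in> D \<Longrightarrow> x \<le> y \<Longrightarrow> y \<in> D"
  obtains x :: "nat \<Rightarrow> real" where "decseq x" "range x \<subseteq> D" "D = (\<Union>k. {x k..})"
proof (cases "bdd_below D")
  case False
  define x where "x k = - real k" for k
  have x_in: "x k \<in> D" for k
  proof -
    obtain y where "y \<in> D" "y \<le> x k"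
      using False unfolding bdd_below_def by (meson linorder_le_cases)
    then show ?thesis using up by blast
  qed
  have "D \<subseteq> (\<Union>k. {x k..})"
  proof
    fix y assume "y \<in> D"
    obtain k :: nat where "- y \<le> real k" using real_arch_simple by blast
    then have "x k \<le> y" by (simp add: x_def)
    then show "y \<in> (\<Union>k. {x k..})" by blast
  qed
  with x_in up have "D = (\<Union>k. {x k..})" by blast
  with x_in show ?thesis by (intro that) (auto simp: decseq_def x_def)
next
  case bdd: True
  define c where "c = Inf D"
  have c_le: "c \<le> y" if "y \<in> D" for y
    using bdd that by (simp add: c_def cInf_lower)
  have gt_c: "y \<in> D" if "c < y" for y
  proof -
    have "\<exists>z\<in>D. z < y"
      using cInf_less_iff[OF \<open>D \<noteq> {}\<close> bdd] that by (simp add: c_def)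
    then obtain z where "z \<in> D" "z < y" by blast
    then show ?thesis using up by auto
  qed
  show ?thesis
  proof (cases "c \<in> D")
    case True
    then have "D = {c..}" using c_le up by auto
    then show ?thesis using True by (intro that[of "\<lambda>_. c"]) (auto simp: decseq_def)
  next
    case False
    define x where "x k = c + 1 / real (Suc k)" for k
    have x_in: "x k \<in> D" for k
      by (rule gt_c) (simp add: x_def)
    have "D \<subseteq> (\<Union>k. {x k..})"
    proof
      fix y assume "y \<in> D"
      with False c_le[of y] have "0 < y - c" by (cases "y = c") auto
      then obtain k where "1 / real (Suc k) < y - c" using nat_approx_posE by blast
      then have "x k \<le> y" by (simp add: x_def)
      then show "y \<in> (\<Union>k. {x k..})" by blast
    qed
    with x_in up have "D = (\<Union>k. {x k..})" by blast
    moreover have "decseq x"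
      by (auto simp: decseq_def x_def frac_le)
    ultimately show ?thesis using x_in by (intro that) auto
  qed
qed

lemma sum_emeasure_upclosed_preimage_le:
  fixes m :: "'i \<Rightarrow> 'a measure" and c :: "'i \<Rightarrow> ennreal" and f :: "'a \<Rightarrow> real"
  assumes "finite I" and sets_m: "\<And>i. i \<in> I \<Longrightarrow> sets (m i) = sets M"
    and f[measurable]: "f \<in> borel_measurable M"
    and up: "\<And>r s. r \<in> D \<Longrightarrow> r \<le> s \<Longrightarrow> s \<in> D"
    and bound: "\<And>r. r \<in> D \<Longrightarrow> (\<Sum>i\<in>I. c i * emeasure (m i) {y \<in> space M. r \<le> f y}) \<le> \<beta>"
  shows "{x \<in> space M. f x \<in> D} \<in> sets M"
    and "(\<Sum>i\<in>I. c i * emeasure (m i) {x \<in> space M. f x \<in> D}) \<le> \<beta>"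
proof -
  have "{x \<in> space M. f x \<in> D} \<in> sets M \<and> (\<Sum>i\<in>I. c i * emeasure (m i) {x \<in> space M. f x \<in> D}) \<le> \<beta>"
  proof (cases "D = {}")
    case False
    then obtain x where x: "decseq x" "range x \<subseteq> D" "D = (\<Union>k. {x k..})"
      using upclosed_real_eq_UN_atLeast up by blast
    define E where "E k = {y \<in> space M. x k \<le> f y}" for k
    have E_in: "E k \<in> sets M" for k
      unfolding E_def by measurable
    then have E_sets: "range E \<subseteq> sets (m i)" if "i \<in> I" for i
      using sets_m[OF that] by auto
    have E_inc: "incseq E"
      using x(1) by (auto simp: incseq_def decseq_def E_def intro: order_trans)
    have D_eq: "{z \<in> space M. f z \<in> D} = (\<Union>k. E k)"
      using x(3) by (auto simp: E_def)
    have "(\<Sum>i\<in>I. c i * emeasure (m i) (\<Union>k. E k)) = (\<Sum>i\<in>I. SUP k. c i * emeasure (m i) (E k))"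
      using E_sets E_inc by (simp add: SUP_emeasure_incseq[symmetric] SUP_mult_left_ennreal)
    also have "\<dots> = (SUP k. \<Sum>i\<in>I. c i * emeasure (m i) (E k))"
      using E_inc E_sets
      by (intro ennreal_SUP_sum[symmetric] monoI mult_left_mono emeasure_mono)
         (auto simp: incseq_def)
    also have "\<dots> \<le> \<beta>"
      using x(2) bound by (auto simp: E_def intro: SUP_least)
    finally show ?thesis
      unfolding D_eq using E_in by (auto intro: sets.countable_nat_UN)
  qed simp
  then show "{x \<in> space M. f x \<in> D} \<in> sets M"
    and "(\<Sum>i\<in>I. c i * emeasure (m i) {x \<in> space M. f x \<in> D}) \<le> \<beta>"
    by auto
qed

lemma sum_emeasure_survival_le:
  fixes m :: "'i \<Rightarrow> 'a measure" and c :: "'i \<Rightarrow> ennreal" and f :: "'a \<Rightarrow> real"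
    and g :: "'a \<Rightarrow> ennreal"
  assumes "finite I" and sets_m: "\<And>i. i \<in> I \<Longrightarrow> sets (m i) = sets M"
    and f[measurable]: "f \<in> borel_measurable M"
    and g: "\<And>i. i \<in> I \<Longrightarrow>
      AE x in m i. g x = (\<Sum>j\<in>I. c j * emeasure (m j) {y \<in> space M. f x \<le> f y})"
  shows "(\<Sum>i\<in>I. c i * emeasure (m i) {x \<in> space M. g x \<le> \<beta>}) \<le> \<beta>"
proof -
  define G where "G r = (\<Sum>j\<in>I. c j * emeasure (m j) {y \<in> space M. r \<le> f y})" for r
  define D where "D = {r. G r \<le> \<beta>}"
  have G_antimono: "G s \<le> G r" if "r \<le> s" for r s
    unfolding G_def using that sets_m by (intro sum_mono mult_left_mono emeasure_mono) auto
  have up: "s \<in> D" if "r \<in> D" "r \<le> s" for r s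
    using order_trans[OF G_antimono[OF that(2)]] that(1) by (simp add: D_def)
  note preimage_D = sum_emeasure_upclosed_preimage_le[OF \<open>finite I\<close> sets_m f up, where c=c and \<beta>=\<beta>]
  have "emeasure (m i) {x \<in> space M. g x \<le> \<beta>} \<le> emeasure (m i) {x \<in> space M. f x \<in> D}"
    if "i \<in> I" for i
  proof (rule emeasure_mono_AE)
    show "AE x in m i. x \<in> {x \<in> space M. g x \<le> \<beta>} \<longrightarrow> x \<in> {x \<in> space M. f x \<in> D}"
      using g[OF that] by eventually_elim (auto simp: D_def G_def)
    show "{x \<in> space M. f x \<in> D} \<in> sets (m i)"
      using preimage_D(1) sets_m[OF that] by (simp add: D_def G_def)
  qed
  then have "(\<Sum>i\<in>I. c i * emeasure (m i) {x \<in> space M. g x \<le> \<beta>})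
      \<le> (\<Sum>i\<in>I. c i * emeasure (m i) {x \<in> space M. f x \<in> D})"
    by (intro sum_mono mult_left_mono) auto
  also have "\<dots> \<le> \<beta>"
    using preimage_D(2) by (simp add: D_def G_def)
  finally show ?thesis .
qed

lemma measurable_emeasure_section:
  assumes \<kappa>: "\<kappa> \<in> MU \<rightarrow>\<^sub>M subprob_algebra N" and C: "C \<in> sets (N \<Otimes>\<^sub>M MU)"
  shows "(\<lambda>u. emeasure (\<kappa> u) ((\<lambda>t. (t, u)) -` C)) \<in> borel_measurable MU"
proof (rule emeasure_measurable_subprob_algebra2[OF _ \<kappa>])
  have "(SIGMA u:space MU. (\<lambda>t. (t, u)) -` C) = (\<lambda>(u, t). (t, u)) -` C \<inter> space (MU \<Otimes>\<^sub>M N)"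
    using sets.sets_into_space[OF C] by (auto simp: space_pair_measure)
  also have "\<dots> \<in> sets (MU \<Otimes>\<^sub>M N)"
    by (rule measurable_sets[OF _ C]) measurable
  finally show "(SIGMA u:space MU. (\<lambda>t. (t, u)) -` C) \<in> sets (MU \<Otimes>\<^sub>M N)" .
qed

lemma
  fixes \<kappa> :: "'u \<Rightarrow> 'a measure"
  assumes nonempty: "space Q \<noteq> {}" and sets_Q: "sets Q = sets MU"
    and \<kappa>: "\<kappa> \<in> MU \<rightarrow>\<^sub>M subprob_algebra N"
  shows sets_bind_distr_Pair: "sets (Q \<bind> (\<lambda>u. distr (\<kappa> u) (N \<Otimes>\<^sub>M MU) (\<lambda>t. (t, u)))) = sets (N \<Otimes>\<^sub>M MU)"
    and emeasure_bind_distr_Pair: "X \<in> sets (N \<Otimes>\<^sub>M MU) \<Longrightarrow>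
      emeasure (Q \<bind> (\<lambda>u. distr (\<kappa> u) (N \<Otimes>\<^sub>M MU) (\<lambda>t. (t, u)))) X =
        (\<integral>\<^sup>+ u. emeasure (\<kappa> u) ((\<lambda>t. (t, u)) -` X) \<partial>Q)"
proof -
  define D where "D u = distr (\<kappa> u) (N \<Otimes>\<^sub>M MU) (\<lambda>t. (t, u))" for u
  have sets_\<kappa>: "sets (\<kappa> u) = sets N" if "u \<in> space MU" for u
    using measurable_space[OF \<kappa> that] by (simp add: space_subprob_algebra)
  have D: "D \<in> Q \<rightarrow>\<^sub>M subprob_algebra (N \<Otimes>\<^sub>M MU)"
    unfolding D_def
  proof (rule measurable_distr2)
    show "(\<lambda>(u, t). (t, u)) \<in> Q \<Otimes>\<^sub>M N \<rightarrow>\<^sub>M N \<Otimes>\<^sub>M MU"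
      by (simp add: sets_Q cong: measurable_cong_sets sets_pair_measure_cong) measurable
    show "\<kappa> \<in> Q \<rightarrow>\<^sub>M subprob_algebra N"
      using \<kappa> by (simp add: sets_Q cong: measurable_cong_sets)
  qed
  show "sets (Q \<bind> (\<lambda>u. distr (\<kappa> u) (N \<Otimes>\<^sub>M MU) (\<lambda>t. (t, u)))) = sets (N \<Otimes>\<^sub>M MU)"
    using measurable_space[OF D] unfolding D_def[symmetric]
    by (intro sets_bind[OF _ nonempty]) (auto simp: space_subprob_algebra)
  assume X: "X \<in> sets (N \<Otimes>\<^sub>M MU)"
  show "emeasure (Q \<bind> (\<lambda>u. distr (\<kappa> u) (N \<Otimes>\<^sub>M MU) (\<lambda>t. (t, u)))) X =
      (\<integral>\<^sup>+ u. emeasure (\<kappa> u) ((\<lambda>t. (t, u)) -` X) \<partial>Q)"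
    unfolding D_def[symmetric] emeasure_bind[OF nonempty D X]
  proof (intro nn_integral_cong)
    fix u assume "u \<in> space Q"
    then have u: "u \<in> space MU" using sets_eq_imp_space_eq[OF sets_Q] by simp
    have Pair_u: "(\<lambda>t. (t, u)) \<in> \<kappa> u \<rightarrow>\<^sub>M N \<Otimes>\<^sub>M MU"
      using u by (simp add: sets_\<kappa> cong: measurable_cong_sets)
    have "X \<subseteq> space N \<times> space MU"
      using sets.sets_into_space[OF X] by (simp add: space_pair_measure)
    then have "(\<lambda>t. (t, u)) -` X \<subseteq> space N"
      by (auto dest: subsetD)
    then have "(\<lambda>t. (t, u)) -` X \<inter> space (\<kappa> u) = (\<lambda>t. (t, u)) -` X"
      unfolding sets_eq_imp_space_eq[OF sets_\<kappa>[OF u]] by (rule Int_absorb2)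
    then show "emeasure (D u) X = emeasure (\<kappa> u) ((\<lambda>t. (t, u)) -` X)"
      unfolding D_def emeasure_distr[OF Pair_u X] by (rule arg_cong)
  qed
qed

lemma emeasure_eq_nn_integral_section:
  fixes K :: "('a \<times> 'u) measure" and Q :: "'u measure" and \<kappa> :: "'u \<Rightarrow> 'a measure"
  assumes "finite_measure K" and sets_K: "sets K = sets (N \<Otimes>\<^sub>M MU)"
    and sets_Q: "sets Q = sets MU" and \<kappa>: "\<kappa> \<in> MU \<rightarrow>\<^sub>M subprob_algebra N"
    and rect: "\<And>A B. A \<in> sets N \<Longrightarrow> B \<in> sets MU \<Longrightarrow>
      emeasure K (A \<times> B) = (\<integral>\<^sup>+ u\<in>B. emeasure (\<kappa> u) A \<partial>Q)"
    and C: "C \<in> sets (N \<Otimes>\<^sub>M MU)"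
  shows "emeasure K C = (\<integral>\<^sup>+ u. emeasure (\<kappa> u) ((\<lambda>t. (t, u)) -` C) \<partial>Q)"
proof (cases "space Q = {}")
  case True
  then have "C = {}"
    using sets.sets_into_space[OF C] sets_eq_imp_space_eq[OF sets_Q] by (auto simp: space_pair_measure)
  with True show ?thesis by (simp add: nn_integral_empty)
next
  case nonempty: False
  define L where "L = Q \<bind> (\<lambda>u. distr (\<kappa> u) (N \<Otimes>\<^sub>M MU) (\<lambda>t. (t, u)))"
  note emeasure_L = emeasure_bind_distr_Pair[OF nonempty sets_Q \<kappa>, folded L_def]
  let ?R = "{A \<times> B | A B. A \<in> sets N \<and> B \<in> sets MU}"
  have "K = L"
  proof (rule measure_eqI_generator_eq[OF Int_stable_pair_measure_generator[of N MU]])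
    show "?R \<subseteq> Pow (space N \<times> space MU)"
      by (auto dest: sets.sets_into_space)
    show "sets K = sigma_sets (space N \<times> space MU) ?R"
      using sets_K by (simp add: sets_pair_measure)
    show "sets L = sigma_sets (space N \<times> space MU) ?R"
      using sets_bind_distr_Pair[OF nonempty sets_Q \<kappa>] by (simp add: L_def sets_pair_measure)
    fix X assume "X \<in> ?R"
    then obtain A B where AB: "X = A \<times> B" "A \<in> sets N" "B \<in> sets MU" by auto
    have "emeasure L X = (\<integral>\<^sup>+ u. emeasure (\<kappa> u) ((\<lambda>t. (t, u)) -` X) \<partial>Q)"
      using AB by (intro emeasure_L) auto
    also have "\<dots> = (\<integral>\<^sup>+ u\<in>B. emeasure (\<kappa> u) A \<partial>Q)"
      by (intro nn_integral_cong) (auto simp: AB indicator_def)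
    finally show "emeasure K X = emeasure L X" using rect AB by simp
  next
    show "range (\<lambda>_. space N \<times> space MU) \<subseteq> ?R" by auto
    show "(\<Union>i::nat. space N \<times> space MU) = space N \<times> space MU" by simp
    show "emeasure K (space N \<times> space MU) \<noteq> \<infinity>"
      using \<open>finite_measure K\<close> by (simp add: finite_measure.emeasure_finite)
  qed
  with emeasure_L[OF C] show ?thesis by simp
qed

lemma measure_PiM_Collect_single:
  assumes "\<And>i. prob_space (M i)" and "i \<in> I" and "A \<in> sets (M i)"
  shows "measure (PiM I M) {\<omega> \<in> space (PiM I M). \<omega> i \<in> A} = measure (M i) A"
proof -
  interpret product_prob_space M I
    using assms(1) by (simp add: product_prob_space_def product_prob_space_axioms_def
        product_sigma_finite_def prob_space_imp_sigma_finite)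
  show ?thesis
    using emeasure_PiM_Collect_single[OF assms(2,3)] by (simp add: measure_def)
qed

lemma oracle_pvalue_versionD:
  assumes "oracle_pvalue_version K0 MU Q n \<nu>s P" and "0 < n" and "B \<in> sets MU"
  shows "(\<Sum>i<n. emeasure (K0 (\<nu>s i)) ({s. \<bar>t\<bar> \<le> \<bar>s\<bar>} \<times> B)) =
    (\<Sum>i<n. \<integral>\<^sup>+ u\<in>B. ennreal (P t u) \<partial>Q (\<nu>s i))"
  using assms unfolding oracle_pvalue_version_def by (simp add: ennreal_mult_cancel_left)

locale finite_mixture =
  fixes I :: "'i set" and MU :: "'u measure" and Q :: "'i \<Rightarrow> 'u measure"
  assumes finite_index: "finite I" and index_nonempty: "I \<noteq> {}"
    and prob_space_component: "\<And>i. i \<in> I \<Longrightarrow> prob_space (Q i)"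
    and sets_component: "\<And>i. i \<in> I \<Longrightarrow> sets (Q i) = sets MU"
begin

definition mixture :: "'u measure" where
  "mixture = count_space I \<bind> Q"

definition weight :: "'i \<Rightarrow> 'u \<Rightarrow> ennreal" where
  "weight i = RN_deriv mixture (Q i)"

lemma component_measurable: "Q \<in> count_space I \<rightarrow>\<^sub>M subprob_algebra MU"
  by (auto simp: space_subprob_algebra sets_component prob_space_component
      intro: prob_space_imp_subprob_space)

lemma sets_mixture: "sets mixture = sets MU"
  unfolding mixture_def
  by (rule sets_bind[where N=MU]) (use index_nonempty sets_component in auto)

lemma space_mixture: "space mixture = space MU"
  using sets_mixture by (rule sets_eq_imp_space_eq)

lemma nn_integral_mixture:
  "f \<in> borel_measurable MU \<Longrightarrow> (\<integral>\<^sup>+ u. f u \<partial>mixture) = (\<Sum>i\<in>I. \<integral>\<^sup>+ u. f u \<partial>Q i)"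
  unfolding mixture_def using nn_integral_bind[OF _ component_measurable] finite_index
  by (simp add: nn_integral_count_space_finite)

lemma emeasure_mixture:
  assumes "B \<in> sets MU" shows "emeasure mixture B = (\<Sum>i\<in>I. emeasure (Q i) B)"
  using nn_integral_mixture[of "indicator B"] assms by (simp add: sets_mixture sets_component)

lemma emeasure_mixture_space: "emeasure mixture (space mixture) = of_nat (card I)"
proof -
  have "space (Q i) = space MU" if "i \<in> I" for i
    using sets_component[OF that] by (rule sets_eq_imp_space_eq)
  then have "emeasure mixture (space mixture) = (\<Sum>i\<in>I. emeasure (Q i) (space (Q i)))"
    unfolding space_mixture emeasure_mixture[OF sets.top] by simp
  then show ?thesis by (simp add: prob_space.emeasure_space_1 prob_space_component)
qed

sublocale finite_measure mixture
  by (rule finite_measureI) (simp add: emeasure_mixture_space)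

lemma absolutely_continuous_component:
  assumes "i \<in> I" shows "absolutely_continuous mixture (Q i)"
  unfolding absolutely_continuous_def
proof
  fix B assume "B \<in> null_sets mixture"
  then have B: "B \<in> sets MU" "emeasure mixture B = 0"
    by (auto simp: sets_mixture)
  then have "(\<Sum>j\<in>I. emeasure (Q j) B) = 0"
    by (simp add: emeasure_mixture)
  then show "B \<in> null_sets (Q i)"
    using assms B(1) finite_index by (simp add: sets_component null_sets_def sum_eq_0_iff)
qed

lemma borel_measurable_weight[measurable]: "weight i \<in> borel_measurable MU"
  using borel_measurable_RN_deriv[of mixture "Q i"] unfolding weight_def
  by (simp add: sets_mixture cong: measurable_cong_sets)

lemma nn_integral_component:
  assumes "i \<in> I" and "f \<in> borel_measurable MU"
  shows "(\<integral>\<^sup>+ u. f u \<partial>Q i) = (\<integral>\<^sup>+ u. weight i u * f u \<partial>mixture)"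
  unfolding weight_def using assms
  by (intro RN_deriv_nn_integral absolutely_continuous_component)
     (simp_all add: sets_component sets_mixture cong: measurable_cong_sets)

end

locale mixture_disintegration = finite_mixture I MU Q
  for I :: "'i set" and MU :: "'u measure" and Q :: "'i \<Rightarrow> 'u measure" +
  fixes K :: "'i \<Rightarrow> (real \<times> 'u) measure" and \<kappa> :: "'i \<Rightarrow> 'u \<Rightarrow> real measure"
  assumes prob_space_joint: "\<And>i. i \<in> I \<Longrightarrow> prob_space (K i)"
    and sets_joint: "\<And>i. i \<in> I \<Longrightarrow> sets (K i) = sets (borel \<Otimes>\<^sub>M MU)"
    and conditional_kernel: "\<And>i. i \<in> I \<Longrightarrow> \<kappa> i \<in> MU \<rightarrow>\<^sub>M prob_algebra borel"
    and disintegration: "\<And>i A B. i \<in> I \<Longrightarrow> A \<in> sets borel \<Longrightarrow> B \<in> sets MU \<Longrightarrow>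
      emeasure (K i) (A \<times> B) = (\<integral>\<^sup>+ u\<in>B. emeasure (\<kappa> i u) A \<partial>Q i)"
begin

definition survival :: "real \<Rightarrow> 'u \<Rightarrow> ennreal" where
  "survival t u = (\<Sum>i\<in>I. weight i u * emeasure (\<kappa> i u) {s. \<bar>t\<bar> \<le> \<bar>s\<bar>})"

lemma conditional_subprob: "i \<in> I \<Longrightarrow> \<kappa> i \<in> MU \<rightarrow>\<^sub>M subprob_algebra borel"
  by (rule measurable_prob_algebraD[OF conditional_kernel])

lemma sets_conditional: "i \<in> I \<Longrightarrow> u \<in> space MU \<Longrightarrow> sets (\<kappa> i u) = sets borel"
  using measurable_space[OF conditional_kernel] by (simp add: space_prob_algebra)

lemma sum_emeasure_joint:
  assumes C: "C \<in> sets (borel \<Otimes>\<^sub>M MU)"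
  shows "(\<Sum>i\<in>I. emeasure (K i) C) =
    (\<integral>\<^sup>+ u. (\<Sum>i\<in>I. weight i u * emeasure (\<kappa> i u) ((\<lambda>t. (t, u)) -` C)) \<partial>mixture)"
proof -
  have section_measurable: "(\<lambda>u. emeasure (\<kappa> i u) ((\<lambda>t. (t, u)) -` C)) \<in> borel_measurable MU"
    if "i \<in> I" for i
    using measurable_emeasure_section[OF conditional_subprob[OF that] C] .
  have "(\<Sum>i\<in>I. emeasure (K i) C) = (\<Sum>i\<in>I. \<integral>\<^sup>+ u. emeasure (\<kappa> i u) ((\<lambda>t. (t, u)) -` C) \<partial>Q i)"
    using prob_space_joint sets_joint sets_component conditional_subprob disintegration C
    by (intro sum.cong refl emeasure_eq_nn_integral_section) (auto intro: prob_space.finite_measure)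
  also have "\<dots> = (\<Sum>i\<in>I. \<integral>\<^sup>+ u. weight i u * emeasure (\<kappa> i u) ((\<lambda>t. (t, u)) -` C) \<partial>mixture)"
    using section_measurable by (intro sum.cong refl nn_integral_component)
  also have "\<dots> = (\<integral>\<^sup>+ u. (\<Sum>i\<in>I. weight i u * emeasure (\<kappa> i u) ((\<lambda>t. (t, u)) -` C)) \<partial>mixture)"
    by (intro nn_integral_sum[symmetric] borel_measurable_times_ennreal)
       (simp_all add: measurable_cong_sets[OF sets_mixture refl] section_measurable)
  finally show ?thesis .
qed

lemma survival_measurable: "(\<lambda>x. survival (fst x) (snd x)) \<in> borel_measurable (borel \<Otimes>\<^sub>M MU)"
  unfolding survival_def
proof (intro borel_measurable_sum borel_measurable_times_ennreal)
  fix i assume i: "i \<in> I"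
  show "(\<lambda>x. weight i (snd x)) \<in> borel_measurable (borel \<Otimes>\<^sub>M MU)"
    by measurable
  show "(\<lambda>x. emeasure (\<kappa> i (snd x)) {s. \<bar>fst x\<bar> \<le> \<bar>s\<bar>}) \<in> borel_measurable (borel \<Otimes>\<^sub>M MU)"
  proof (rule emeasure_measurable_subprob_algebra2)
    have "(SIGMA x:space (borel \<Otimes>\<^sub>M MU). {s::real. \<bar>fst x\<bar> \<le> \<bar>s\<bar>}) =
        {p \<in> space ((borel \<Otimes>\<^sub>M MU) \<Otimes>\<^sub>M borel). \<bar>fst (fst p)\<bar> \<le> \<bar>snd p\<bar>}"
      by (auto simp: space_pair_measure)
    also have "\<dots> \<in> sets ((borel \<Otimes>\<^sub>M MU) \<Otimes>\<^sub>M borel)"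
      by measurable
    finally show "(SIGMA x:space (borel \<Otimes>\<^sub>M MU). {s::real. \<bar>fst x\<bar> \<le> \<bar>s\<bar>}) \<in> sets ((borel \<Otimes>\<^sub>M MU) \<Otimes>\<^sub>M borel)" .
    show "(\<lambda>x. \<kappa> i (snd x)) \<in> borel \<Otimes>\<^sub>M MU \<rightarrow>\<^sub>M subprob_algebra borel"
      using measurable_snd conditional_subprob[OF i] by (rule measurable_compose)
  qed
qed

lemma nn_integral_survival:
  assumes B: "B \<in> sets MU"
  shows "(\<Sum>i\<in>I. emeasure (K i) ({s. \<bar>t\<bar> \<le> \<bar>s\<bar>} \<times> B)) =
    (\<integral>\<^sup>+ u. survival t u * indicator B u \<partial>mixture)"
proof -
  have C: "{s. \<bar>t\<bar> \<le> \<bar>s\<bar>} \<times> B \<in> sets (borel \<Otimes>\<^sub>M MU)"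
    using B by simp
  show ?thesis
    unfolding sum_emeasure_joint[OF C]
    by (intro nn_integral_cong) (auto simp: survival_def indicator_def sum_distrib_right)
qed

lemma AE_survival_eq_version:
  assumes P: "(\<lambda>(t, u). P t u) \<in> borel_measurable (borel \<Otimes>\<^sub>M MU)"
    and version: "\<And>t B. B \<in> sets MU \<Longrightarrow>
      (\<Sum>i\<in>I. emeasure (K i) ({s. \<bar>t\<bar> \<le> \<bar>s\<bar>} \<times> B)) = (\<Sum>i\<in>I. \<integral>\<^sup>+ u\<in>B. ennreal (P t u) \<partial>Q i)"
  shows "AE u in mixture. AE t in lborel. survival t u = ennreal (P t u)"
proof -
  have P'[measurable]: "(\<lambda>x. P (fst x) (snd x)) \<in> borel_measurable (borel \<Otimes>\<^sub>M MU)"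
    using P by (simp add: case_prod_beta')
  note survival_measurable[measurable]
  have P_t[measurable]: "P t \<in> borel_measurable MU" for t
    using measurable_Pair2[OF P', of t] by simp
  have survival_t[measurable]: "survival t \<in> borel_measurable MU" for t
    using measurable_Pair2[OF survival_measurable, of t] by simp
  have "AE u in mixture. survival t u = ennreal (P t u)" for t
  proof (rule density_unique_finite_measure)
    show "survival t \<in> borel_measurable mixture" "(\<lambda>u. ennreal (P t u)) \<in> borel_measurable mixture"
      unfolding measurable_cong_sets[OF sets_mixture refl] by measurable
    fix B assume "B \<in> sets mixture"
    then have B: "B \<in> sets MU" by (simp add: sets_mixture)
    have "(\<integral>\<^sup>+ u. survival t u * indicator B u \<partial>mixture) = (\<Sum>i\<in>I. \<integral>\<^sup>+ u\<in>B. ennreal (P t u) \<partial>Q i)"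
      using nn_integral_survival[OF B] version[OF B] by simp
    also have "\<dots> = (\<integral>\<^sup>+ u. ennreal (P t u) * indicator B u \<partial>mixture)"
      using B by (intro nn_integral_mixture[symmetric] borel_measurable_times_ennreal
          borel_measurable_indicator) measurable
    finally show "(\<integral>\<^sup>+ u. survival t u * indicator B u \<partial>mixture) =
      (\<integral>\<^sup>+ u. ennreal (P t u) * indicator B u \<partial>mixture)" .
  qed auto
  then have AE_t: "AE t in lborel. AE u in mixture. survival t u = ennreal (P t u)"
    by simp
  interpret pair_sigma_finite lborel mixture
    by (intro pair_sigma_finite.intro sigma_finite_lborel sigma_finite_measure_axioms)
  have "{x \<in> space (lborel \<Otimes>\<^sub>M mixture). survival (fst x) (snd x) = ennreal (P (fst x) (snd x))}
      \<in> sets (lborel \<Otimes>\<^sub>M mixture)"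
    unfolding sets_pair_measure_cong[OF sets_lborel sets_mixture]
      sets_eq_imp_space_eq[OF sets_pair_measure_cong[OF sets_lborel sets_mixture]]
    by measurable
  with AE_t show ?thesis
    by (subst (asm) AE_commute) simp_all
qed

lemma conditional_pvalue_le:
  assumes ac: "\<And>i. i \<in> I \<Longrightarrow> absolutely_continuous lborel (\<kappa> i u)"
    and u: "u \<in> space MU" and P_u: "(\<lambda>t. P t u) \<in> borel_measurable borel"
    and AE_u: "AE t in lborel. survival t u = ennreal (P t u)"
  shows "(\<Sum>i\<in>I. weight i u * emeasure (\<kappa> i u) {t. P t u \<le> \<alpha>}) \<le> ennreal \<alpha>"
proof -
  let ?E = "{t \<in> space borel. ennreal (P t u) \<le> ennreal \<alpha>}"
  have "(\<Sum>i\<in>I. weight i u * emeasure (\<kappa> i u) {t. P t u \<le> \<alpha>})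
      \<le> (\<Sum>i\<in>I. weight i u * emeasure (\<kappa> i u) ?E)"
    using P_u sets_conditional[OF _ u]
    by (intro sum_mono mult_left_mono emeasure_mono) (auto intro: ennreal_leI)
  also have "\<dots> \<le> ennreal \<alpha>"
  proof (rule sum_emeasure_survival_le[where M=borel and f=abs])
    fix i assume i: "i \<in> I"
    show "AE t in \<kappa> i u. ennreal (P t u) =
        (\<Sum>j\<in>I. weight j u * emeasure (\<kappa> j u) {s \<in> space borel. \<bar>t\<bar> \<le> \<bar>s\<bar>})"
      using absolutely_continuous_AE[OF sets_conditional[OF i u, folded sets_lborel] ac[OF i] AE_u]
      by (simp add: survival_def eq_commute)
  qed (use finite_index sets_conditional[OF _ u] in auto)
  finally show ?thesis .
qed

lemma sum_measure_pvalue_le: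
  assumes ac: "\<And>i u. i \<in> I \<Longrightarrow> u \<in> space MU \<Longrightarrow> absolutely_continuous lborel (\<kappa> i u)"
    and P: "(\<lambda>(t, u). P t u) \<in> borel_measurable (borel \<Otimes>\<^sub>M MU)"
    and version: "\<And>t B. B \<in> sets MU \<Longrightarrow>
      (\<Sum>i\<in>I. emeasure (K i) ({s. \<bar>t\<bar> \<le> \<bar>s\<bar>} \<times> B)) = (\<Sum>i\<in>I. \<integral>\<^sup>+ u\<in>B. ennreal (P t u) \<partial>Q i)"
    and \<alpha>: "0 \<le> \<alpha>"
  shows "(\<Sum>i\<in>I. measure (K i) {x \<in> space (borel \<Otimes>\<^sub>M MU). P (fst x) (snd x) \<le> \<alpha>})
    \<le> \<alpha> * card I"
proof -
  have P'[measurable]: "(\<lambda>x. P (fst x) (snd x)) \<in> borel_measurable (borel \<Otimes>\<^sub>M MU)"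
    using P by (simp add: case_prod_beta')
  define A where "A = {x \<in> space (borel \<Otimes>\<^sub>M MU). P (fst x) (snd x) \<le> \<alpha>}"
  have A: "A \<in> sets (borel \<Otimes>\<^sub>M MU)"
    unfolding A_def by measurable
  have bound: "(\<Sum>i\<in>I. weight i u * emeasure (\<kappa> i u) ((\<lambda>t. (t, u)) -` A)) \<le> ennreal \<alpha>"
    if "AE t in lborel. survival t u = ennreal (P t u)" for u
  proof (cases "u \<in> space MU")
    case True
    then have "(\<lambda>t. (t, u)) -` A = {t. P t u \<le> \<alpha>}"
      by (auto simp: A_def space_pair_measure)
    with True that show ?thesis
      using measurable_Pair1[OF P' True] ac by (simp add: conditional_pvalue_le)
  qed (auto simp: A_def space_pair_measure)
  have "emeasure (K i) A = ennreal (measure (K i) A)" if "i \<in> I" for i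
    using prob_space_joint[OF that] by (rule finite_measure.emeasure_eq_measure[OF prob_space.finite_measure])
  then have "ennreal (\<Sum>i\<in>I. measure (K i) A) = (\<Sum>i\<in>I. emeasure (K i) A)"
    by simp
  also have "\<dots> =
      (\<integral>\<^sup>+ u. (\<Sum>i\<in>I. weight i u * emeasure (\<kappa> i u) ((\<lambda>t. (t, u)) -` A)) \<partial>mixture)"
    by (rule sum_emeasure_joint[OF A])
  also have "\<dots> \<le> (\<integral>\<^sup>+ u. ennreal \<alpha> \<partial>mixture)"
    using AE_survival_eq_version[OF P version] bound
    by (intro nn_integral_mono_AE) (auto elim: AE_mp)
  also have "\<dots> = ennreal (\<alpha> * card I)"
    using \<alpha> by (simp add: emeasure_mixture_space ennreal_mult ennreal_of_nat_eq_real_of_nat)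
  finally have "ennreal (\<Sum>i\<in>I. measure (K i) A) \<le> ennreal (\<alpha> * card I)" .
  then show ?thesis
    using \<alpha> by (simp add: A_def ennreal_le_iff)
qed

end

lemma sum_measure_oracle_pvalue_le:
  fixes K0 :: "'v \<Rightarrow> (real \<times> 'u) measure" and \<nu>s :: "nat \<Rightarrow> 'v"
  assumes "\<And>\<nu>. prob_space (K0 \<nu>)" and "\<And>\<nu>. sets (K0 \<nu>) = sets (borel \<Otimes>\<^sub>M MU)"
    and "\<And>\<nu>. prob_space (Q \<nu>)" and "\<And>\<nu>. sets (Q \<nu>) = sets MU"
    and "\<And>\<nu>. \<kappa> \<nu> \<in> MU \<rightarrow>\<^sub>M prob_algebra borel"
    and "\<And>\<nu> A B. A \<in> sets borel \<Longrightarrow> B \<in> sets MU \<Longrightarrow>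
      emeasure (K0 \<nu>) (A \<times> B) = (\<integral>\<^sup>+ u\<in>B. emeasure (\<kappa> \<nu> u) A \<partial>Q \<nu>)"
    and "\<And>\<nu> u. u \<in> space MU \<Longrightarrow> absolutely_continuous lborel (\<kappa> \<nu> u)"
    and "0 < n" and P: "oracle_pvalue_version K0 MU Q n \<nu>s P" and "0 \<le> \<alpha>"
  shows "(\<Sum>i<n. measure (K0 (\<nu>s i)) {x \<in> space (borel \<Otimes>\<^sub>M MU). P (fst x) (snd x) \<le> \<alpha>})
    \<le> \<alpha> * n"
proof -
  interpret mixture_disintegration "{..<n}" MU "\<lambda>i. Q (\<nu>s i)" "\<lambda>i. K0 (\<nu>s i)" "\<lambda>i. \<kappa> (\<nu>s i)"
    by (intro mixture_disintegration.intro finite_mixture.intro mixture_disintegration_axioms.intro)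
       (simp_all add: lessThan_empty_iff assms)
  have "(\<Sum>i<n. measure (K0 (\<nu>s i)) {x \<in> space (borel \<Otimes>\<^sub>M MU). P (fst x) (snd x) \<le> \<alpha>})
      \<le> \<alpha> * card {..<n}"
  proof (rule sum_measure_pvalue_le)
    show "(\<lambda>(t, u). P t u) \<in> borel_measurable (borel \<Otimes>\<^sub>M MU)"
      using P by (simp add: oracle_pvalue_version_def)
  qed (use assms oracle_pvalue_versionD[OF P \<open>0 < n\<close>] in auto)
  then show ?thesis by simp
qed

theorem proposition5:
  fixes K :: "'th \<Rightarrow> 'v \<Rightarrow> (real \<times> 'u) measure"
    and MU :: "'u measure"
    and Q :: "'v \<Rightarrow> 'u measure"
    and \<kappa> :: "'v \<Rightarrow> 'u \<Rightarrow> real measure"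
    and \<theta>0 :: 'th
    and n :: nat
    and \<theta>s :: "nat \<Rightarrow> 'th"
    and \<nu>s :: "nat \<Rightarrow> 'v"
    and Por :: "real \<Rightarrow> 'u \<Rightarrow> real"
  assumes kernel_prob: "\<And>\<theta> \<nu>. prob_space (K \<theta> \<nu>)"
    and kernel_sets: "\<And>\<theta> \<nu>. sets (K \<theta> \<nu>) = sets (borel \<Otimes>\<^sub>M MU)"
    and U_law: "\<And>\<theta> \<nu>. distr (K \<theta> \<nu>) MU snd = Q \<nu>"
    and cond_kernel: "\<And>\<nu>. \<kappa> \<nu> \<in> MU \<rightarrow>\<^sub>M prob_algebra borel"
    and disintegration: "\<And>\<nu> A B. A \<in> sets borel \<Longrightarrow> B \<in> sets MU \<Longrightarrow>
           emeasure (K \<theta>0 \<nu>) (A \<times> B) = (\<integral>\<^sup>+ u\<in>B. emeasure (\<kappa> \<nu> u) A \<partial>(Q \<nu>))"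
    and assumption1: "\<And>\<nu> u. u \<in> space MU \<Longrightarrow> absolutely_continuous lborel (\<kappa> \<nu> u)"
    and n_pos: "0 < n"
    and Por_def: "oracle_pvalue_version (K \<theta>0) MU Q n \<nu>s Por"
  shows "(SUP \<alpha>\<in>{0..1::real}.
            max ((1 / real n) *
                 (\<Sum>i\<in>{i. i < n \<and> \<theta>s i = \<theta>0}.
                    measure (PiM {..<n} (\<lambda>i. K (\<theta>s i) (\<nu>s i)))
                      {\<omega> \<in> space (PiM {..<n} (\<lambda>i. K (\<theta>s i) (\<nu>s i))).
                         Por (fst (\<omega> i)) (snd (\<omega> i)) \<le> \<alpha>}) - \<alpha>) 0) \<le> 0"
proof (rule cSUP_least)
  fix \<alpha> :: real assume \<alpha>: "\<alpha> \<in> {0..1}"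
  have snd_measurable: "snd \<in> K \<theta> \<nu> \<rightarrow>\<^sub>M MU" for \<theta> \<nu>
    using measurable_snd by (simp add: kernel_sets cong: measurable_cong_sets)
  have Q_prob: "prob_space (Q \<nu>)" for \<nu>
    using prob_space.prob_space_distr[OF kernel_prob snd_measurable] U_law by metis
  have Q_sets: "sets (Q \<nu>) = sets MU" for \<nu>
    using U_law[of \<theta>0 \<nu>] by (metis sets_distr)
  have [measurable]: "(\<lambda>x. Por (fst x) (snd x)) \<in> borel_measurable (borel \<Otimes>\<^sub>M MU)"
    using Por_def by (simp add: oracle_pvalue_version_def case_prod_beta')
  define A where "A = {x \<in> space (borel \<Otimes>\<^sub>M MU). Por (fst x) (snd x) \<le> \<alpha>}"
  have A: "A \<in> sets (K \<theta> \<nu>)" for \<theta> \<nu>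
    unfolding A_def kernel_sets by measurable
  let ?M = "PiM {..<n} (\<lambda>i. K (\<theta>s i) (\<nu>s i))"
  have "{\<omega> \<in> space ?M. Por (fst (\<omega> i)) (snd (\<omega> i)) \<le> \<alpha>} = {\<omega> \<in> space ?M. \<omega> i \<in> A}"
    if "i < n" for i
    using that sets_eq_imp_space_eq[OF kernel_sets] by (auto simp: A_def space_PiM)
  then have "(\<Sum>i\<in>{i. i < n \<and> \<theta>s i = \<theta>0}. measure ?M {\<omega> \<in> space ?M. Por (fst (\<omega> i)) (snd (\<omega> i)) \<le> \<alpha>})
      = (\<Sum>i\<in>{i. i < n \<and> \<theta>s i = \<theta>0}. measure (K \<theta>0 (\<nu>s i)) A)"
    using kernel_prob A by (intro sum.cong) (auto simp: measure_PiM_Collect_single)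
  also have "\<dots> \<le> (\<Sum>i<n. measure (K \<theta>0 (\<nu>s i)) A)"
    by (rule sum_mono2) auto
  also have "\<dots> \<le> \<alpha> * n"
    unfolding A_def using \<alpha>
    by (intro sum_measure_oracle_pvalue_le[OF kernel_prob kernel_sets Q_prob Q_sets cond_kernel
          disintegration assumption1 n_pos Por_def]) auto
  finally show "max (1 / real n * (\<Sum>i\<in>{i. i < n \<and> \<theta>s i = \<theta>0}. measure ?M
      {\<omega> \<in> space ?M. Por (fst (\<omega> i)) (snd (\<omega> i)) \<le> \<alpha>}) - \<alpha>) 0 \<le> 0"
    using n_pos by (simp add: field_simps)
qed simp

end
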